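(* Let $n\ge 4$, $N=\{1,\dots,n\}$, fix distinct $i_1,i_2\in N$ and let $\hat N^c=N\setminus\{i_1,i_2\}$. Then the inequality $$x_{i_2i_1}+\sum_{j\in\hat N^c}\left(x_{i_1j}+x_{ji_1}\right)-\sum_{j\in\hat N^c}x_{i_2j}-\sum_{j,j'\in\hat N^c:\,j\ne j'} x_{jj'}\le 2-\frac{(n-3)(n-4)}{2}$$ is a valid inequality for the weak order polytope $P^n_{WO}$, i.e. it holds for every point $x\in P^n_{WO}$.
   Context: Let $N=\{1,\dots,n\}$ and $A_N=\{(i,j): i,j\in N, i\ne j\}$. A weak order on $N$ is a binary relation $W\subseteq N\times N$ that is reflexive, transitive and total; $(i,j)\in W$ is read "$i$ is preferred over or tied with $j$". The characteristic vector of $W$ is $x^W\in\{0,1\}^{A_N}$ with $x^W_{(i,j)}=1$ if $(i,j)\in W$ and $0$ otherwise. The weak order polytope $P^n_{WO}$ is the convex hull of the characteristic vectors of all weak orders on $N$; its points are vectors $x\in\mathbb{R}^{A_N}$ and $x_{ij}$ denotes the coordinate $x_{(i,j)}$. *)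

theory Defs
  imports "HOL-Analysis.Analysis"
begin

definition ground :: "nat \<Rightarrow> nat set" where
  "ground n = {1..n}"

definition arcs :: "nat \<Rightarrow> (nat \<times> nat) set" where
  "arcs n = {(i, j). i \<in> ground n \<and> j \<in> ground n \<and> i \<noteq> j}"

definition weak_order :: "nat \<Rightarrow> (nat \<times> nat) set \<Rightarrow> bool" where
  "weak_order n W \<longleftrightarrow> W \<subseteq> ground n \<times> ground n \<and> refl_on (ground n) W \<and> trans W
     \<and> (\<forall>i\<in>ground n. \<forall>j\<in>ground n. (i, j) \<in> W \<or> (j, i) \<in> W)"

definition char_vec :: "nat \<Rightarrow> (nat \<times> nat) set \<Rightarrow> (nat \<times> nat \<Rightarrow> real)" where
  "char_vec n W = (\<lambda>a. if a \<in> arcs n \<and> a \<in> W then 1 else 0)"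

text \<open>Function spaces carry no real_vector instance, so the convex hull is written out
  explicitly as the set of finite convex combinations (cf. convex_hull_explicit).\<close>
definition weak_order_polytope :: "nat \<Rightarrow> (nat \<times> nat \<Rightarrow> real) set" where
  "weak_order_polytope n =
     {x. \<exists>S u. finite S \<and> S \<subseteq> {char_vec n W | W. weak_order n W}
          \<and> (\<forall>v\<in>S. 0 \<le> u v) \<and> sum u S = 1
          \<and> x = (\<lambda>a. \<Sum>v\<in>S. u v * v a)}"

end

theory Submission
  imports Defs
begin

text \<open>For a vertex \<open>x = char_vec n W\<close>, let \<open>m = n - 2\<close> be the size of \<open>C = N - {i1, i2}\<close> and
  \<open>a\<close> the number of elements of \<open>C\<close> tied with \<open>i1\<close>. Totality gives
  \<open>\<Sum>j\<in>C. x(i1,j) + x(j,i1) = m + a\<close>, and since every pair of \<open>C\<close> is comparable while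
  the \<open>a\<close> elements tied with \<open>i1\<close> are tied with each other, the off-diagonal sum over \<open>C\<close>
  is at least \<open>(m(m-1) + a(a-1))/2\<close>. If \<open>i2\<close> is preferred over or tied with \<open>i1\<close>, it is
  so with all \<open>a\<close> elements tied with \<open>i1\<close>, which cancels the gain of \<open>x(i2,i1) = 1\<close>;
  otherwise the loss \<open>a(a-1)/2 - a \<ge> -1\<close> suffices. Summing up, the left-hand side is at most
  \<open>1 + m - m(m-1)/2 = 2 - (n-3)(n-4)/2\<close>. The inequality is linear, so it extends from the
  vertices to their convex hull.\<close>

definition off_diagonal :: "'a set \<Rightarrow> ('a \<times> 'a) set" where
  "off_diagonal C = {(j, j'). j \<in> C \<and> j' \<in> C \<and> j \<noteq> j'}"

lemma off_diagonal_mono: "A \<subseteq> C \<Longrightarrow> off_diagonal A \<subseteq> off_diagonal C"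
  unfolding off_diagonal_def by auto

lemma finite_off_diagonal: "finite C \<Longrightarrow> finite (off_diagonal C)"
  by (rule finite_subset[of _ "C \<times> C"]) (auto simp: off_diagonal_def)

lemma card_off_diagonal:
  assumes "finite C"
  shows "card (off_diagonal C) = card C * (card C - 1)"
proof -
  have "off_diagonal C = C \<times> C - (\<lambda>j. (j, j)) ` C"
    unfolding off_diagonal_def by auto
  moreover have "card ((\<lambda>j. (j, j)) ` C) = card C"
    by (rule card_image) (auto simp: inj_on_def)
  ultimately show ?thesis
    using assms
    by (simp add: card_Diff_subset card_cartesian_product diff_mult_distrib2 image_subset_iff)
qed

lemma swap_off_diagonal: "prod.swap ` off_diagonal C = off_diagonal C"
  unfolding off_diagonal_def by force

lemma of_nat_le_one_plus_pairs: "real k \<le> 1 + real k * (real k - 1) / 2"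
proof (cases "k \<le> 1")
  case False
  then have "0 \<le> (real k - 1) * (real k - 2)" by simp
  then show ?thesis by (simp add: field_simps)
qed (auto simp: le_Suc_eq)

lemma char_vec_arc:
  assumes "i \<in> ground n" "j \<in> ground n" "i \<noteq> j"
  shows "char_vec n W (i, j) = of_bool ((i, j) \<in> W)"
  using assms unfolding char_vec_def arcs_def by simp

lemma char_vec_nonneg: "0 \<le> char_vec n W a"
  unfolding char_vec_def by simp

lemma char_vec_add_swap:
  assumes "weak_order n W" "i \<in> ground n" "j \<in> ground n" "i \<noteq> j"
  shows "char_vec n W (i, j) + char_vec n W (j, i) = 1 + of_bool ((i, j) \<in> W \<and> (j, i) \<in> W)"
  using assms char_vec_arc[of i n j W] char_vec_arc[of j n i W]
  unfolding weak_order_def by auto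

lemma sum_char_vec_add_swap:
  assumes "weak_order n W" "i \<in> ground n" "C \<subseteq> ground n - {i}"
  shows "(\<Sum>j\<in>C. char_vec n W (i, j) + char_vec n W (j, i))
       = real (card C) + real (card {j \<in> C. (i, j) \<in> W \<and> (j, i) \<in> W})"
proof -
  have "finite C"
    using assms(3) finite_subset unfolding ground_def by blast
  moreover have "C \<inter> {j. (i, j) \<in> W \<and> (j, i) \<in> W} = {j \<in> C. (i, j) \<in> W \<and> (j, i) \<in> W}"
    by blast
  moreover have "(\<Sum>j\<in>C. char_vec n W (i, j) + char_vec n W (j, i))
      = (\<Sum>j\<in>C. 1 + of_bool ((i, j) \<in> W \<and> (j, i) \<in> W))"
  proof (rule sum.cong)
    fix j assume "j \<in> C"
    with assms(3) have "j \<in> ground n" "i \<noteq> j" by auto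
    then show "char_vec n W (i, j) + char_vec n W (j, i)
        = 1 + of_bool ((i, j) \<in> W \<and> (j, i) \<in> W)"
      by (rule char_vec_add_swap[OF assms(1,2)])
  qed simp
  ultimately show ?thesis
    by (simp add: sum.distrib)
qed

lemma card_le_sum_char_vec:
  assumes "A \<subseteq> C" "C \<subseteq> ground n - {k}" "k \<in> ground n" "\<And>j. j \<in> A \<Longrightarrow> (k, j) \<in> W"
  shows "real (card A) \<le> (\<Sum>j\<in>C. char_vec n W (k, j))"
proof -
  have "finite C"
    using assms(2) finite_subset unfolding ground_def by blast
  have "(\<Sum>j\<in>A. char_vec n W (k, j)) = (\<Sum>j\<in>A. 1)"
  proof (rule sum.cong)
    fix j assume "j \<in> A"
    with assms have "j \<in> ground n" "k \<noteq> j" "(k, j) \<in> W" by auto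
    then show "char_vec n W (k, j) = 1"
      using assms(3) by (simp add: char_vec_arc)
  qed simp
  then have "real (card A) = (\<Sum>j\<in>A. char_vec n W (k, j))"
    by simp
  also have "\<dots> \<le> (\<Sum>j\<in>C. char_vec n W (k, j))"
    using \<open>finite C\<close> assms(1) by (intro sum_mono2) (auto simp: char_vec_nonneg)
  finally show ?thesis .
qed

lemma sum_char_vec_off_diagonal_ge:
  assumes W: "weak_order n W" and "C \<subseteq> ground n" "A \<subseteq> C"
    and tied: "\<And>j j'. j \<in> A \<Longrightarrow> j' \<in> A \<Longrightarrow> (j, j') \<in> W"
  shows "real (card (off_diagonal C)) + real (card (off_diagonal A))
       \<le> 2 * (\<Sum>p\<in>off_diagonal C. char_vec n W p)"
proof -
  let ?D = "off_diagonal C" and ?x = "char_vec n W"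
  have "finite C"
    using assms(2) finite_subset unfolding ground_def by blast
  then have finD: "finite ?D"
    by (rule finite_off_diagonal)
  have "off_diagonal A \<subseteq> ?D"
    using assms(3) by (rule off_diagonal_mono)
  then have "real (card ?D) + real (card (off_diagonal A))
      = (\<Sum>p\<in>?D. 1 + of_bool (p \<in> off_diagonal A))"
    using finD by (simp add: sum.distrib Int_absorb1 Int_def[symmetric])
  also have "\<dots> \<le> (\<Sum>p\<in>?D. ?x p + ?x (prod.swap p))"
  proof (rule sum_mono)
    fix p assume "p \<in> ?D"
    then obtain j j' where p: "p = (j, j')" "j \<in> C" "j' \<in> C" "j \<noteq> j'"
      unfolding off_diagonal_def by blast
    have "p \<in> off_diagonal A \<Longrightarrow> (j, j') \<in> W \<and> (j', j) \<in> W"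
      using tied p(1) unfolding off_diagonal_def by auto
    moreover have "j \<in> ground n" "j' \<in> ground n"
      using p assms(2) by auto
    ultimately show "1 + of_bool (p \<in> off_diagonal A) \<le> ?x p + ?x (prod.swap p)"
      using p char_vec_add_swap[OF W, of j j'] by auto
  qed
  also have "(\<Sum>p\<in>?D. ?x (prod.swap p)) = (\<Sum>p\<in>?D. ?x p)"
    using sum.reindex[of prod.swap ?D ?x] by (simp add: swap_off_diagonal)
  then have "(\<Sum>p\<in>?D. ?x p + ?x (prod.swap p)) = 2 * (\<Sum>p\<in>?D. ?x p)"
    by (simp add: sum.distrib)
  finally show ?thesis .
qed

lemma weak_order_vertex_inequality:
  fixes n i1 i2 :: nat
  assumes "n \<ge> 4" and i1: "i1 \<in> ground n" and i2: "i2 \<in> ground n" and "i1 \<noteq> i2"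
    and W: "weak_order n W"
  defines "x \<equiv> char_vec n W" and "C \<equiv> ground n - {i1, i2}"
  shows "x (i2, i1) + (\<Sum>j\<in>C. x (i1, j) + x (j, i1)) - (\<Sum>j\<in>C. x (i2, j))
      - (\<Sum>p\<in>off_diagonal C. x p) \<le> 2 - real ((n - 3) * (n - 4)) / 2"
proof -
  define A where "A = {j \<in> C. (i1, j) \<in> W \<and> (j, i1) \<in> W}"
  define m where "m = real (card C)"
  define a where "a = real (card A)"
  have "finite C"
    unfolding C_def ground_def by simp
  have "card C = n - 2"
    using assms(2-4) unfolding C_def by (simp add: card_Diff_subset ground_def)
  then have rhs: "real ((n - 3) * (n - 4)) = (m - 1) * (m - 2)"
    using \<open>n \<ge> 4\<close> unfolding m_def by (simp add: of_nat_diff)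
  have trans: "trans W"
    using W unfolding weak_order_def by simp
  have "A \<subseteq> C"
    unfolding A_def by blast
  have "(\<Sum>j\<in>C. x (i1, j) + x (j, i1)) = m + a"
    unfolding x_def m_def a_def A_def using W i1
    by (intro sum_char_vec_add_swap) (auto simp: C_def)
  moreover have "m * (m - 1) + a * (a - 1) \<le> 2 * (\<Sum>p\<in>off_diagonal C. x p)"
  proof -
    have "\<And>j j'. j \<in> A \<Longrightarrow> j' \<in> A \<Longrightarrow> (j, j') \<in> W"
      unfolding A_def using trans by (auto dest: transD)
    then have "real (card (off_diagonal C)) + real (card (off_diagonal A))
        \<le> 2 * (\<Sum>p\<in>off_diagonal C. x p)"
      unfolding x_def using W \<open>A \<subseteq> C\<close> by (intro sum_char_vec_off_diagonal_ge) (auto simp: C_def)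
    moreover have "real (card (off_diagonal B)) = real (card B) * (real (card B) - 1)"
      if "finite B" for B :: "nat set"
      using that by (cases "card B") (auto simp: card_off_diagonal algebra_simps)
    ultimately show ?thesis
      using \<open>finite C\<close> finite_subset[OF \<open>A \<subseteq> C\<close>] unfolding m_def a_def by simp
  qed
  moreover have "x (i2, i1) - (\<Sum>j\<in>C. x (i2, j)) + a \<le> 1 + a * (a - 1) / 2"
  proof (cases "(i2, i1) \<in> W")
    case True
    then have "x (i2, i1) = 1"
      unfolding x_def using assms(2-4) by (simp add: char_vec_arc)
    moreover have "a \<le> (\<Sum>j\<in>C. x (i2, j))"
      unfolding a_def x_def using True trans \<open>A \<subseteq> C\<close> i2
      by (intro card_le_sum_char_vec) (auto simp: A_def C_def dest: transD)
    moreover have "0 \<le> a * (a - 1)"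
      unfolding a_def by (cases "card A") auto
    ultimately show ?thesis by linarith
  next
    case False
    then have "x (i2, i1) = 0"
      unfolding x_def using assms(2-4) by (simp add: char_vec_arc)
    moreover have "0 \<le> (\<Sum>j\<in>C. x (i2, j))"
      unfolding x_def by (simp add: sum_nonneg char_vec_nonneg)
    ultimately show ?thesis
      using of_nat_le_one_plus_pairs[of "card A"] unfolding a_def by linarith
  qed
  ultimately show ?thesis
    unfolding rhs by (simp add: field_simps)
qed

definition linear_functional :: "(('a \<Rightarrow> real) \<Rightarrow> real) \<Rightarrow> bool" where
  "linear_functional L \<longleftrightarrow>
     (\<forall>S u. finite S \<longrightarrow> L (\<lambda>a. \<Sum>v\<in>S. u v * v a) = (\<Sum>v\<in>S. u v * L v))"

lemma linear_functional_eval: "linear_functional (\<lambda>y. y a)"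
  unfolding linear_functional_def by simp

lemma linear_functional_add:
  "linear_functional L \<Longrightarrow> linear_functional M \<Longrightarrow> linear_functional (\<lambda>y. L y + M y)"
  unfolding linear_functional_def by (simp add: sum.distrib distrib_left)

lemma linear_functional_diff:
  "linear_functional L \<Longrightarrow> linear_functional M \<Longrightarrow> linear_functional (\<lambda>y. L y - M y)"
  unfolding linear_functional_def by (simp add: sum_subtractf right_diff_distrib)

lemma linear_functional_sum:
  "(\<And>k. k \<in> K \<Longrightarrow> linear_functional (F k)) \<Longrightarrow> linear_functional (\<lambda>y. \<Sum>k\<in>K. F k y)"
  unfolding linear_functional_def by (simp add: sum_distrib_left sum.swap[of _ K])

lemma weak_order_polytope_le:
  assumes "linear_functional L" and "\<And>W. weak_order n W \<Longrightarrow> L (char_vec n W) \<le> b"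
    and "x \<in> weak_order_polytope n"
  shows "L x \<le> b"
proof -
  obtain S u where "finite S" and S: "S \<subseteq> {char_vec n W | W. weak_order n W}"
    and u: "\<forall>v\<in>S. 0 \<le> u v" "sum u S = 1" and x: "x = (\<lambda>a. \<Sum>v\<in>S. u v * v a)"
    using assms(3) unfolding weak_order_polytope_def by blast
  have "L x = (\<Sum>v\<in>S. u v * L v)"
    using assms(1) \<open>finite S\<close> unfolding x linear_functional_def by blast
  also have "\<dots> \<le> (\<Sum>v\<in>S. u v * b)"
    using S u(1) assms(2) by (intro sum_mono mult_left_mono) auto
  also have "\<dots> = b"
    using u(2) by (simp flip: sum_distrib_right)
  finally show ?thesis .
qed

theorem mainTheorem4:
  fixes n i1 i2 :: nat and x :: "nat \<times> nat \<Rightarrow> real"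
  assumes "n \<ge> 4"
    and "i1 \<in> ground n" and "i2 \<in> ground n" and "i1 \<noteq> i2"
    and "x \<in> weak_order_polytope n"
  shows "x (i2, i1)
      + (\<Sum>j\<in>ground n - {i1, i2}. x (i1, j) + x (j, i1))
      - (\<Sum>j\<in>ground n - {i1, i2}. x (i2, j))
      - (\<Sum>(j, j')\<in>{(j, j'). j \<in> ground n - {i1, i2} \<and> j' \<in> ground n - {i1, i2} \<and> j \<noteq> j'}. x (j, j'))
      \<le> 2 - real ((n - 3) * (n - 4)) / 2"
proof -
  define C where "C = ground n - {i1, i2}"
  let ?L = "\<lambda>y :: nat \<times> nat \<Rightarrow> real. y (i2, i1) + (\<Sum>j\<in>C. y (i1, j) + y (j, i1))
      - (\<Sum>j\<in>C. y (i2, j)) - (\<Sum>p\<in>off_diagonal C. y p)"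
  have "linear_functional ?L"
    by (intro linear_functional_add linear_functional_diff linear_functional_sum
        linear_functional_eval)
  moreover have "\<And>W. weak_order n W \<Longrightarrow> ?L (char_vec n W) \<le> 2 - real ((n - 3) * (n - 4)) / 2"
    unfolding C_def using assms(1-4) by (rule weak_order_vertex_inequality)
  ultimately have "?L x \<le> 2 - real ((n - 3) * (n - 4)) / 2"
    using assms(5) by (rule weak_order_polytope_le)
  then show ?thesis
    by (simp add: C_def off_diagonal_def case_prod_eta)
qed

end
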